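(* Let $m\ge1$, $d\ge1$ and let $A_0,\ldots,A_{m-1}$ be $d\times d$ real matrices. Let $V=\bigoplus_{i=0}^{2m-2}\mathbb{R}^d$, let $V_i\subseteq V$ be the subspace of vectors vanishing in every summand except possibly the $i$-th ($i=0,\ldots,2m-2$), and define linear maps $B_0,B_1\colon V\to V$ by \[B_0(v_0\oplus \cdots \oplus v_{2m-2}):=v_1 \oplus \cdots \oplus v_{2m-2} \oplus 0,\] \[B_1(v_0 \oplus \cdots \oplus v_{2m-2}):= 0 \oplus \cdots \oplus 0 \oplus A_0v_0 \oplus A_1v_1 \oplus \cdots \oplus A_{m-1}v_{m-1}\] (in the second formula the first $m-1$ summands are $0$, and $A_jv_j$ sits in summand $m-1+j$). Let $x=x_1x_2\cdots \in \{0,1\}^{\mathbb{N}}$ and suppose that $B_{x_n}\cdots B_{x_1} V_{m-1} \neq \{0\}$ for every $n \geq 1$. Then for every integer $n \geq 0$ exactly one of the symbols $x_{mn+1},\ldots,x_{m(n+1)}$ is equal to $1$, and the remainder are $0$. *)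

theory Defs
  imports "HOL-Analysis.Analysis"
begin

text \<open>The space V = direct sum of R^d over summands i = 0..2m-2 is represented by
  functions v :: nat => real^'d that vanish at every index i > 2m-2.\<close>

definition Vsp :: "nat \<Rightarrow> (nat \<Rightarrow> real^'d) set" where
  "Vsp m = {v. \<forall>i. i > 2*m - 2 \<longrightarrow> v i = 0}"

definition Vsub :: "nat \<Rightarrow> nat \<Rightarrow> (nat \<Rightarrow> real^'d) set" where
  "Vsub m i = {v \<in> Vsp m. \<forall>j. j \<noteq> i \<longrightarrow> v j = 0}"

definition B0 :: "nat \<Rightarrow> (nat \<Rightarrow> real^'d) \<Rightarrow> (nat \<Rightarrow> real^'d)" where
  "B0 m v = (\<lambda>i. if i < 2*m - 2 then v (i+1) else 0)"

definition B1 :: "nat \<Rightarrow> (nat \<Rightarrow> real^'d^'d) \<Rightarrow> (nat \<Rightarrow> real^'d) \<Rightarrow> (nat \<Rightarrow> real^'d)" where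
  "B1 m A v = (\<lambda>i. if m - 1 \<le> i \<and> i \<le> 2*m - 2
                    then A (i - (m - 1)) *v v (i - (m - 1)) else 0)"

definition Bsym :: "nat \<Rightarrow> (nat \<Rightarrow> real^'d^'d) \<Rightarrow> nat \<Rightarrow> (nat \<Rightarrow> real^'d) \<Rightarrow> (nat \<Rightarrow> real^'d)" where
  "Bsym m A s = (if s = 0 then B0 m else B1 m A)"

primrec word_map :: "nat \<Rightarrow> (nat \<Rightarrow> real^'d^'d) \<Rightarrow> (nat \<Rightarrow> nat) \<Rightarrow> nat \<Rightarrow> (nat \<Rightarrow> real^'d) \<Rightarrow> (nat \<Rightarrow> real^'d)" where
  "word_map m A x 0 = id"
| "word_map m A x (Suc n) = Bsym m A (x (Suc n)) \<circ> word_map m A x n"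

end

theory Submission
  imports Defs
begin

text \<open>A vector of \<open>V\<^sub>m\<^sub>-\<^sub>1\<close> stays concentrated in a single summand under every word in
  \<open>B\<^sub>0, B\<^sub>1\<close>: the symbol 0 moves it one summand down, the symbol 1 moves it \<open>m - 1\<close>
  summands up. After \<open>n\<close> symbols of which \<open>c\<close> are 1 the summand index is therefore
  \<open>m c - n + m - 1\<close>, and since the image is nonzero this index lies in \<open>[0, 2m - 2]\<close>.
  For \<open>n = m N\<close> this pins down \<open>c = N\<close>, so every block of \<open>m\<close> consecutive symbols
  contains exactly one 1.\<close>

primrec summand_index :: "nat \<Rightarrow> (nat \<Rightarrow> nat) \<Rightarrow> nat \<Rightarrow> int" where
  "summand_index m x 0 = int m - 1"
| "summand_index m x (Suc n) =
     (if x (Suc n) = 0 then summand_index m x n - 1 else summand_index m x n + (int m - 1))"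

definition nonzero_count :: "(nat \<Rightarrow> nat) \<Rightarrow> nat \<Rightarrow> nat" where
  "nonzero_count x n = card {j \<in> {1..n}. x j \<noteq> 0}"

lemma nonzero_count_0 [simp]: "nonzero_count x 0 = 0"
  by (simp add: nonzero_count_def)

lemma nonzero_count_Suc:
  "nonzero_count x (Suc n) = nonzero_count x n + (if x (Suc n) = 0 then 0 else 1)"
proof -
  have "{j \<in> {1..Suc n}. x j \<noteq> 0} =
        {j \<in> {1..n}. x j \<noteq> 0} \<union> (if x (Suc n) = 0 then {} else {Suc n})"
    by (auto simp: le_Suc_eq)
  then show ?thesis
    by (simp add: nonzero_count_def)
qed

lemma nonzero_count_add:
  "nonzero_count x (a + b) = nonzero_count x a + card {j \<in> {a+1..a+b}. x j \<noteq> 0}"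
proof -
  have "{j \<in> {1..a+b}. x j \<noteq> 0} = {j \<in> {1..a}. x j \<noteq> 0} \<union> {j \<in> {a+1..a+b}. x j \<noteq> 0}"
    by auto
  then show ?thesis
    unfolding nonzero_count_def by (subst card_Un_disjoint[symmetric]) auto
qed

lemma summand_index_eq:
  "summand_index m x n = int m * int (nonzero_count x n) - int n + int m - 1"
  by (induction n) (auto simp: nonzero_count_Suc algebra_simps)

lemma Bsym_in_Vsp: "Bsym m A s v \<in> Vsp m"
  by (simp add: Vsp_def Bsym_def B0_def B1_def)

lemma word_map_in_Vsp: "v \<in> Vsp m \<Longrightarrow> word_map m A x n v \<in> Vsp m"
  by (cases n) (simp_all add: Bsym_in_Vsp)

lemma word_map_supported:
  assumes "m \<ge> 1" "v \<in> Vsub m (m - 1)" "int j \<noteq> summand_index m x n"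
  shows "word_map m A x n v j = 0"
  using assms(3)
proof (induction n arbitrary: j)
  case 0
  then show ?case using assms by (auto simp: Vsub_def of_nat_diff)
next
  case (Suc n)
  show ?case
  proof (cases "x (Suc n) = 0")
    case True
    then show ?thesis using Suc.prems Suc.IH[of "j + 1"]
      by (auto simp: Bsym_def B0_def)
  next
    case False
    then show ?thesis using Suc.prems Suc.IH[of "j - (m - 1)"] assms(1)
      by (auto simp: Bsym_def B1_def of_nat_diff)
  qed
qed

lemma summand_index_bounds:
  assumes "m \<ge> 1" "v \<in> Vsub m (m - 1)" "word_map m A x n v \<noteq> (\<lambda>_. 0)"
  shows "0 \<le> summand_index m x n \<and> summand_index m x n \<le> 2 * int m - 2"
proof -
  obtain i where i: "word_map m A x n v i \<noteq> 0"
    using assms(3) by auto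
  have "int i = summand_index m x n"
    using word_map_supported[OF assms(1,2)] i by blast
  moreover have "word_map m A x n v \<in> Vsp m"
    using assms(2) by (intro word_map_in_Vsp) (simp add: Vsub_def)
  then have "i \<le> 2 * m - 2"
    using i by (auto simp: Vsp_def not_less[symmetric])
  ultimately show ?thesis
    using assms(1) by linarith
qed

lemma int_eq_if_mult_bounds:
  fixes m a b :: int
  assumes "m \<ge> 1" "0 \<le> m * a - m * b + m - 1" "m * a - m * b + m - 1 \<le> 2 * m - 2"
  shows "a = b"
proof -
  have "m * (-1) < m * (a - b)" "m * (a - b) < m * 1"
    using assms(2,3) by (simp_all add: right_diff_distrib)
  then have "-1 < a - b" "a - b < 1"
    using assms(1) by (simp_all only: mult_less_cancel_left_pos)
  then show ?thesis by simp
qed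

lemma unique_if_card_eq_1:
  assumes "card {j \<in> I. P j} = 1"
  shows "\<exists>j\<in>I. P j \<and> (\<forall>k\<in>I. k \<noteq> j \<longrightarrow> \<not> P k)"
  using assms by (auto simp: card_1_singleton_iff)

theorem lemma7:
  fixes m :: nat and A :: "nat \<Rightarrow> real^'d^'d" and x :: "nat \<Rightarrow> nat"
  assumes "m \<ge> 1"
    and "\<And>k. k \<ge> 1 \<Longrightarrow> x k \<in> {0, 1}"
    and "\<And>n. n \<ge> 1 \<Longrightarrow> word_map m A x n ` Vsub m (m - 1) \<noteq> {\<lambda>_. 0}"
  shows "\<forall>n::nat. \<exists>j\<in>{m*n+1..m*(n+1)}. x j = 1 \<and>
           (\<forall>k\<in>{m*n+1..m*(n+1)}. k \<noteq> j \<longrightarrow> x k = 0)"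
proof -
  have zero_in_Vsub: "(\<lambda>_. 0) \<in> Vsub m (m - 1)"
    by (simp add: Vsub_def Vsp_def)
  have bounds: "0 \<le> summand_index m x n \<and> summand_index m x n \<le> 2 * int m - 2" for n
  proof (cases "n = 0")
    case False
    then obtain v where "v \<in> Vsub m (m - 1)" "word_map m A x n v \<noteq> (\<lambda>_. 0)"
      using assms(3)[of n] zero_in_Vsub by fastforce
    then show ?thesis
      using summand_index_bounds[OF assms(1)] by blast
  qed (use assms(1) in simp)
  have count: "nonzero_count x (m * N) = N" for N
    using bounds[of "m * N"] assms(1)
    by (intro int_eq_if_mult_bounds[of "int m", THEN of_nat_eq_iff[THEN iffD1]])
       (simp_all add: summand_index_eq)
  show ?thesis
  proof
    fix n
    let ?block = "{m*n+1..m*(n+1)}"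
    have "card {j \<in> ?block. x j \<noteq> 0} = 1"
      using nonzero_count_add[of x "m*n" m] count[of n] count[of "n + 1"] by (simp add: algebra_simps)
    then obtain j where "j \<in> ?block" "x j \<noteq> 0" "\<forall>k\<in>?block. k \<noteq> j \<longrightarrow> x k = 0"
      using unique_if_card_eq_1[of ?block "\<lambda>j. x j \<noteq> 0"] by auto
    moreover have "x j = 1"
      using assms(2)[of j] \<open>j \<in> ?block\<close> \<open>x j \<noteq> 0\<close> by auto
    ultimately show "\<exists>j\<in>?block. x j = 1 \<and> (\<forall>k\<in>?block. k \<noteq> j \<longrightarrow> x k = 0)"
      by blast
  qed
qed

end
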